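(* Let $\mathbb{F}$ be a field of characteristic zero and $n\le m$ natural numbers. Then $W_{n,m}=\mathrm{span}_{\mathbb{F}}\{P_O: O\in\Omega_{n,m}\}$.
   Context: $\mathbb{F}\langle X\rangle$ is the free non-unitary associative algebra on $X=\{x_1,x_2,\dots\}$; $(x^n)^T$ is the smallest ideal containing $x^n$ invariant under all algebra endomorphisms; $V_m$ is the space of multilinear polynomials of degree $m$ in $x_1,\dots,x_m$; $W_{n,m}:=V_m\cap(x^n)^T$. An ordered partition of $[m]=\{1,\dots,m\}$ into $n$ parts is a set $O=\{A_1,\dots,A_n\}$ of nonempty ordered lists $A_i$ of elements of $[m]$ whose underlying sets are pairwise disjoint with union $[m]$; $\Omega_{n,m}$ is the set of these. For a list $A=[\![ab\cdots c]\!]$, $x_A:=x_ax_b\cdots x_c$, and $P_O:=\sum_{\sigma\in S_n}x_{A_{\sigma(1)}}\cdots x_{A_{\sigma(n)}}$. *)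

theory Defs
  imports Main
begin

text \<open>Elements of the free non-unitary associative algebra F<X>, X = {x_1, x_2, ...},
  are represented by their coefficient functions on words: a word is a list of
  positive variable indices; the empty word and words containing index 0 get
  coefficient 0; the support is finite.\<close>

type_synonym 'a ncpoly = "nat list \<Rightarrow> 'a"

definition ncpolys :: "('a::field) ncpoly set" where
  "ncpolys = {p. finite {w. p w \<noteq> 0} \<and> (\<forall>w. p w \<noteq> 0 \<longrightarrow> w \<noteq> [] \<and> 0 \<notin> set w)}"

definition nczero :: "('a::field) ncpoly" where "nczero = (\<lambda>w. 0)"
definition ncadd :: "('a::field) ncpoly \<Rightarrow> 'a ncpoly \<Rightarrow> 'a ncpoly" where
  "ncadd p q = (\<lambda>w. p w + q w)"
definition ncscale :: "'a::field \<Rightarrow> 'a ncpoly \<Rightarrow> 'a ncpoly" where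
  "ncscale c p = (\<lambda>w. c * p w)"
definition ncmult :: "('a::field) ncpoly \<Rightarrow> 'a ncpoly \<Rightarrow> 'a ncpoly" where
  "ncmult p q = (\<lambda>w. \<Sum>k\<le>length w. p (take k w) * q (drop k w))"

definition ncmon :: "nat list \<Rightarrow> ('a::field) ncpoly" where
  "ncmon u = (\<lambda>w. if w = u then 1 else 0)"
definition ncvar :: "nat \<Rightarrow> ('a::field) ncpoly" where
  "ncvar i = ncmon [i]"

fun ncpow :: "('a::field) ncpoly \<Rightarrow> nat \<Rightarrow> 'a ncpoly" where
  "ncpow p 0 = nczero"  \<comment> \<open>unused: no unit in a non-unitary algebra\<close>
| "ncpow p (Suc 0) = p"
| "ncpow p (Suc (Suc k)) = ncmult p (ncpow p (Suc k))"

definition ncspan :: "('a::field) ncpoly set \<Rightarrow> 'a ncpoly set" where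
  "ncspan G = {p. \<exists>S c. finite S \<and> S \<subseteq> G \<and> p = (\<lambda>w. \<Sum>g\<in>S. c g * g w)}"

definition is_ncideal :: "('a::field) ncpoly set \<Rightarrow> bool" where
  "is_ncideal I \<longleftrightarrow> I \<subseteq> ncpolys \<and> nczero \<in> I \<and>
     (\<forall>p\<in>I. \<forall>q\<in>I. ncadd p q \<in> I) \<and> (\<forall>c. \<forall>p\<in>I. ncscale c p \<in> I) \<and>
     (\<forall>p\<in>I. \<forall>a\<in>ncpolys. ncmult a p \<in> I \<and> ncmult p a \<in> I)"

definition is_ncendo :: "(('a::field) ncpoly \<Rightarrow> 'a ncpoly) \<Rightarrow> bool" where
  "is_ncendo \<phi> \<longleftrightarrow> \<phi> ` ncpolys \<subseteq> ncpolys \<and>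
     (\<forall>p\<in>ncpolys. \<forall>q\<in>ncpolys. \<phi> (ncadd p q) = ncadd (\<phi> p) (\<phi> q)) \<and>
     (\<forall>c. \<forall>p\<in>ncpolys. \<phi> (ncscale c p) = ncscale c (\<phi> p)) \<and>
     (\<forall>p\<in>ncpolys. \<forall>q\<in>ncpolys. \<phi> (ncmult p q) = ncmult (\<phi> p) (\<phi> q))"

definition Tideal_pow :: "nat \<Rightarrow> ('a::field) ncpoly set" where
  "Tideal_pow n = \<Inter>{I. is_ncideal I \<and> ncpow (ncvar 1) n \<in> I \<and>
                        (\<forall>\<phi>. is_ncendo \<phi> \<longrightarrow> \<phi> ` I \<subseteq> I)}"

definition Vmult :: "nat \<Rightarrow> ('a::field) ncpoly set" where
  "Vmult m = {p \<in> ncpolys. \<forall>w. p w \<noteq> 0 \<longrightarrow> distinct w \<and> set w = {1..m}}"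

definition Wnm :: "nat \<Rightarrow> nat \<Rightarrow> ('a::field) ncpoly set" where
  "Wnm n m = Vmult m \<inter> Tideal_pow n"

definition Omega :: "nat \<Rightarrow> nat \<Rightarrow> nat list set set" where
  "Omega n m = {Op. finite Op \<and> card Op = n \<and> (\<forall>A\<in>Op. A \<noteq> [] \<and> distinct A) \<and>
      (\<forall>A\<in>Op. \<forall>B\<in>Op. A \<noteq> B \<longrightarrow> set A \<inter> set B = {}) \<and> (\<Union>A\<in>Op. set A) = {1..m}}"

definition P_O :: "nat list set \<Rightarrow> ('a::field) ncpoly" where
  "P_O Op = (\<lambda>w. \<Sum>L\<in>{L. distinct L \<and> set L = Op}. ncmon (concat L) w)"

end

(*
  For a set O of blocks let y_O be the sum of the monomials x_A, A in O; P_O is the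
  symmetrisation of the blocks of O.

  P_O lies in (x^n)^T: by inclusion-exclusion over the blocks that occur,
  P_O = sum over S <= O of (-1)^(|O| - |S|) y_S^n, and y_S^n is the image of x^n under the
  substitution of y_S for every variable.

  Conversely, call f good if for every finite set D of variables the multilinear part of f
  in D is a linear combination of P_O with O an ordered partition of D into n blocks.
  The multilinear part of g^k is a combination of P_O with k blocks. If O has k + 1 > n
  blocks, k P_O is the multilinear part of (y_O + y_O^2)^k, so P_O is a combination of
  those with n blocks (characteristic zero). The multilinear parts of (y_O + x_u)^(n+1)
  and (y_O + y_O x_u)^n differ by x_u P_O, so good polynomials are closed under left
  multiplication, and by reversing words also under right multiplication. Hence they form
  an ideal containing all endomorphic images of x^n, which therefore contains (x^n)^T;
  and a multilinear polynomial of degree m is its own multilinear part in {1..m}.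
*)
theory Submission
  imports Defs "HOL-Library.Poly_Mapping" "HOL-Combinatorics.Multiset_Permutations"
begin

section \<open>The free algebra on words\<close>

text \<open>Concatenation makes words a monoid, so that \<open>nat list \<Rightarrow>\<^sub>0 'a\<close> is the free unital
  algebra; the non-unital algebra of the statement is its part without constant term and
  without the letter 0 (\<open>admissible\<close> below).\<close>

instantiation list :: (type) monoid_add
begin
definition zero_list_def: "0 = []"
definition plus_list_def: "xs + ys = xs @ ys"
instance by standard (auto simp: zero_list_def plus_list_def)
end

type_synonym 'a fpoly = "nat list \<Rightarrow>\<^sub>0 'a"

abbreviation (input) coeff :: "'a::zero fpoly \<Rightarrow> nat list \<Rightarrow> 'a" where
  "coeff \<equiv> Poly_Mapping.lookup"

abbreviation (input) monom :: "nat list \<Rightarrow> 'a::{zero,one} fpoly" where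
  "monom u \<equiv> Poly_Mapping.single u 1"

lemma coeff_mult:
  fixes P Q :: "'a::semiring_0 fpoly"
  shows "coeff (P * Q) w = (\<Sum>k\<le>length w. coeff P (take k w) * coeff Q (drop k w))"
proof -
  have split: "(\<Sum>q. coeff Q q when w = l @ q) = (coeff Q (drop (length l) w) when take (length l) w = l)"
    for l
  proof (cases "take (length l) w = l")
    case True
    then have "w = l @ q \<longleftrightarrow> q = drop (length l) w" for q
      by (metis append_eq_conv_conj)
    then show ?thesis using True by (simp add: when_def)
  next
    case False
    then have "w \<noteq> l @ q" for q by auto
    then show ?thesis using False by simp
  qed
  have inj: "inj_on (\<lambda>k. take k w) {..length w}"
    by (auto simp: inj_on_def) (metis length_take min.absorb2)
  have "coeff (P * Q) w = (\<Sum>l. coeff P l * (coeff Q (drop (length l) w) when take (length l) w = l))"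
    by (simp add: lookup_mult plus_list_def split)
  also have "\<dots> = (\<Sum>l\<in>(\<lambda>k. take k w) ` {..length w}.
      coeff P l * (coeff Q (drop (length l) w) when take (length l) w = l))"
    by (rule Sum_any.expand_superset)
      (auto simp: when_def, metis atMost_iff image_eqI length_take min_def nat_le_linear)
  also have "\<dots> = (\<Sum>k\<le>length w. coeff P (take k w) * coeff Q (drop k w))"
    by (subst sum.reindex[OF inj]) (auto intro!: sum.cong simp: min_def)
  finally show ?thesis .
qed

lemma coeff_single_mult:
  fixes X :: "'a::semiring_0 fpoly"
  shows "coeff (Poly_Mapping.single u c * X) w =
    (if take (length u) w = u then c * coeff X (drop (length u) w) else 0)"
proof -
  have "coeff (Poly_Mapping.single u c * X) w = (\<Sum>k\<le>length w.
      if k = length u then (if take (length u) w = u then c * coeff X (drop (length u) w) else 0) else 0)"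
    unfolding coeff_mult by (rule sum.cong) (auto simp: lookup_single when_def)
  then show ?thesis
    by (auto simp: sum.delta')
qed

lemma single_mult_single: "Poly_Mapping.single u a * Poly_Mapping.single v b = Poly_Mapping.single (u @ v) (a * b)"
  by (simp add: mult_single plus_list_def)

lemma monom_Nil [simp]: "monom [] = (1::'a::semiring_1 fpoly)"
  by (metis single_one zero_list_def)

lemma prod_list_monom: "prod_list (map monom us) = (monom (concat us) :: 'a::semiring_1 fpoly)"
  by (induction us) (simp_all add: single_mult_single)

lemma fpoly_eq_sum_single: "P = (\<Sum>v\<in>Poly_Mapping.keys P. Poly_Mapping.single v (coeff P v))"
  by (rule poly_mapping_eqI) (simp add: lookup_sum lookup_single when_def in_keys_iff)

definition smult :: "'a::field \<Rightarrow> 'a fpoly \<Rightarrow> 'a fpoly" where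
  "smult c P = Poly_Mapping.map ((*) c) P"

lemma coeff_smult [simp]: "coeff (smult c P) w = c * coeff P w"
  by (simp add: smult_def Poly_Mapping.map.rep_eq when_def)

global_interpretation fpoly: module "smult :: 'a::field \<Rightarrow> 'a fpoly \<Rightarrow> 'a fpoly"
  by standard (simp_all add: poly_mapping_eq_iff fun_eq_iff lookup_add algebra_simps)

lemma smult_mult_left: "smult c X * Y = smult c (X * Y)"
  by (rule poly_mapping_eqI) (simp add: coeff_mult sum_distrib_left mult.assoc)

lemma smult_mult_right: "X * smult c Y = smult c (X * Y)"
  by (rule poly_mapping_eqI) (simp add: coeff_mult sum_distrib_left mult.left_commute)

lemma smult_single: "smult c (Poly_Mapping.single u a) = Poly_Mapping.single u (c * a)"
  by (simp add: smult_def)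

lemma of_nat_mult_eq_smult: "of_nat k * X = smult (of_nat k) X"
  by (simp add: smult_def mult_map_scale_conv_mult of_nat_single zero_list_def)

lemma neg_one_power_mult_eq_smult: "(- 1) ^ k * X = smult ((- 1) ^ k) X"
  by (rule poly_mapping_eqI) (induction k, simp_all add: smult_mult_left[symmetric])

definition admissible :: "'a::zero fpoly \<Rightarrow> bool" where
  "admissible P \<longleftrightarrow> (\<forall>w\<in>Poly_Mapping.keys P. w \<noteq> [] \<and> 0 \<notin> set w)"

lemma lookup_in_ncpolys_iff: "coeff P \<in> ncpolys \<longleftrightarrow> admissible P"
  by (auto simp: ncpolys_def admissible_def in_keys_iff)

lemma ncpolysE:
  assumes "p \<in> ncpolys"
  obtains P where "p = coeff P" "admissible P"
proof -
  have "coeff (Abs_poly_mapping p) = p"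
    using assms by (simp add: ncpolys_def)
  then show ?thesis
    using that assms lookup_in_ncpolys_iff by metis
qed

lemma nczero_lookup: "nczero = coeff 0"
  by (simp add: nczero_def fun_eq_iff)

lemma ncadd_lookup: "ncadd (coeff P) (coeff Q) = coeff (P + Q)"
  by (simp add: ncadd_def fun_eq_iff lookup_add)

lemma ncscale_lookup: "ncscale c (coeff P) = coeff (smult c P)"
  by (simp add: ncscale_def fun_eq_iff)

lemma ncmult_lookup: "ncmult (coeff P) (coeff Q) = coeff (P * Q)"
  by (simp add: ncmult_def fun_eq_iff coeff_mult)

lemma ncpow_lookup: "ncpow (coeff P) (Suc k) = coeff (P ^ Suc k)"
  by (induction k) (simp_all add: ncmult_lookup)

lemma ncmon_lookup: "ncmon u = coeff (monom u)"
  by (simp add: ncmon_def fun_eq_iff lookup_single when_def)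

lemma admissible_0 [simp]: "admissible 0"
  by (simp add: admissible_def)

lemma admissible_add: "admissible P \<Longrightarrow> admissible Q \<Longrightarrow> admissible (P + Q)"
  unfolding admissible_def using keys_add[of P Q] by blast

lemma admissible_smult: "admissible P \<Longrightarrow> admissible (smult c P)"
  unfolding admissible_def by (auto simp: in_keys_iff)

lemma admissible_mult: "admissible P \<Longrightarrow> admissible Q \<Longrightarrow> admissible (P * Q)"
  unfolding admissible_def using keys_mult[of P Q] by (fastforce simp: plus_list_def)

lemma admissible_power: "admissible P \<Longrightarrow> admissible (P ^ Suc k)"
  by (induction k) (auto intro: admissible_mult)

lemma admissible_sum: "(\<And>i. i \<in> I \<Longrightarrow> admissible (f i)) \<Longrightarrow> admissible (sum f I)"
  by (induction I rule: infinite_finite_induct) (auto intro: admissible_add)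

lemma admissible_single: "u \<noteq> [] \<Longrightarrow> 0 \<notin> set u \<Longrightarrow> admissible (Poly_Mapping.single u c)"
  by (simp add: admissible_def)

lemma admissible_coeff_Nil: "admissible P \<Longrightarrow> coeff P [] = 0"
  by (auto simp: admissible_def in_keys_iff)

lemma nczero_in_ncpolys: "nczero \<in> ncpolys"
  by (simp add: nczero_lookup lookup_in_ncpolys_iff)

lemma ncadd_in_ncpolys: "p \<in> ncpolys \<Longrightarrow> q \<in> ncpolys \<Longrightarrow> ncadd p q \<in> ncpolys"
  by (metis ncpolysE ncadd_lookup admissible_add lookup_in_ncpolys_iff)

lemma ncscale_in_ncpolys: "p \<in> ncpolys \<Longrightarrow> ncscale c p \<in> ncpolys"
  by (metis ncpolysE ncscale_lookup admissible_smult lookup_in_ncpolys_iff)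

lemma ncmult_in_ncpolys: "p \<in> ncpolys \<Longrightarrow> q \<in> ncpolys \<Longrightarrow> ncmult p q \<in> ncpolys"
  by (metis ncpolysE ncmult_lookup admissible_mult lookup_in_ncpolys_iff)

lemma ncpow_in_ncpolys:
  assumes "p \<in> ncpolys"
  shows "ncpow p k \<in> ncpolys"
proof (cases k)
  case (Suc j)
  then show ?thesis
    using assms by (metis ncpolysE ncpow_lookup admissible_power lookup_in_ncpolys_iff)
qed (simp add: nczero_in_ncpolys)

lemma ncvar_in_ncpolys: "0 < i \<Longrightarrow> ncvar i \<in> ncpolys"
  by (simp add: ncvar_def ncmon_lookup lookup_in_ncpolys_iff admissible_single)

section \<open>Multilinear parts\<close>

definition multilin_part :: "nat set \<Rightarrow> 'a::zero fpoly \<Rightarrow> 'a fpoly" where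
  "multilin_part D P = Poly_Mapping.mapp (\<lambda>w c. if distinct w \<and> set w = D then c else 0) P"

lemma coeff_multilin_part:
  "coeff (multilin_part D P) w = (if distinct w \<and> set w = D then coeff P w else 0)"
  by (auto simp: multilin_part_def lookup_mapp when_def in_keys_iff)

lemma multilin_part_add: "multilin_part D (P + Q) = multilin_part D P + multilin_part D Q"
  by (rule poly_mapping_eqI) (simp add: coeff_multilin_part lookup_add)

lemma multilin_part_diff: "multilin_part D (P - Q) = multilin_part D P - multilin_part D Q"
  by (rule poly_mapping_eqI) (simp add: coeff_multilin_part lookup_minus)

lemma multilin_part_smult: "multilin_part D (smult c P) = smult c (multilin_part D P)"
  by (rule poly_mapping_eqI) (simp add: coeff_multilin_part)

lemma multilin_part_0 [simp]: "multilin_part D 0 = 0"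
  by (rule poly_mapping_eqI) (simp add: coeff_multilin_part)

lemma multilin_part_sum: "multilin_part D (sum f I) = (\<Sum>i\<in>I. multilin_part D (f i))"
  by (induction I rule: infinite_finite_induct) (simp_all add: multilin_part_add)

lemma multilin_part_1: "multilin_part D (1 :: 'a::semiring_1 fpoly) = (if D = {} then 1 else 0)"
  by (rule poly_mapping_eqI) (auto simp: coeff_multilin_part lookup_one zero_list_def when_def)

definition distinct_words :: "nat set \<Rightarrow> nat list set" where
  "distinct_words D = {u. set u \<subseteq> D \<and> distinct u}"

lemma finite_distinct_words: "finite D \<Longrightarrow> finite (distinct_words D)"
  unfolding distinct_words_def by (rule finite_subset_distinct)

lemma distinct_append_set_eq_iff:
  "distinct (u @ v) \<and> set (u @ v) = D \<longleftrightarrow> u \<in> distinct_words D \<and> distinct v \<and> set v = D - set u"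
  by (auto simp: distinct_words_def)

lemma multilin_part_single_mult:
  fixes X :: "'a::semiring_0 fpoly"
  shows "multilin_part D (Poly_Mapping.single u c * X) =
    (if u \<in> distinct_words D then Poly_Mapping.single u c * multilin_part (D - set u) X else 0)"
proof (rule poly_mapping_eqI)
  fix w
  show "coeff (multilin_part D (Poly_Mapping.single u c * X)) w =
    coeff (if u \<in> distinct_words D then Poly_Mapping.single u c * multilin_part (D - set u) X else 0) w"
  proof (cases "take (length u) w = u")
    case True
    then have "w = u @ drop (length u) w"
      by (metis append_take_drop_id)
    then have "distinct w \<and> set w = D \<longleftrightarrow>
        u \<in> distinct_words D \<and> distinct (drop (length u) w) \<and> set (drop (length u) w) = D - set u"
      by (metis distinct_append_set_eq_iff)
    then show ?thesis
      using True by (auto simp: coeff_multilin_part coeff_single_mult)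
  qed (simp add: coeff_multilin_part coeff_single_mult)
qed

lemma multilin_part_mult:
  fixes A X :: "'a::field fpoly"
  assumes "finite D"
  shows "multilin_part D (A * X) =
    (\<Sum>u\<in>distinct_words D. smult (coeff A u) (monom u * multilin_part (D - set u) X))"
proof -
  have "A * X = (\<Sum>u\<in>Poly_Mapping.keys A. Poly_Mapping.single u (coeff A u) * X)"
    by (metis fpoly_eq_sum_single sum_distrib_right)
  then have "multilin_part D (A * X) = (\<Sum>u\<in>Poly_Mapping.keys A \<inter> distinct_words D.
      Poly_Mapping.single u (coeff A u) * multilin_part (D - set u) X)"
    by (simp add: multilin_part_sum multilin_part_single_mult sum.If_cases)
  also have "\<dots> = (\<Sum>u\<in>distinct_words D. smult (coeff A u) (monom u * multilin_part (D - set u) X))"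
    by (rule sum.mono_neutral_cong_left)
      (auto simp: finite_distinct_words assms in_keys_iff smult_single simp flip: smult_mult_left)
  finally show ?thesis .
qed

section \<open>Ordered partitions and symmetrised products\<close>

definition ord_partitions :: "nat \<Rightarrow> nat set \<Rightarrow> nat list set set" where
  "ord_partitions k D = {W. finite W \<and> card W = k \<and> (\<forall>A\<in>W. A \<noteq> [] \<and> distinct A) \<and>
      (\<forall>A\<in>W. \<forall>B\<in>W. A \<noteq> B \<longrightarrow> set A \<inter> set B = {}) \<and> (\<Union>A\<in>W. set A) = D}"

lemma Omega_eq_ord_partitions: "Omega n m = ord_partitions n {1..m}"
  by (simp add: Omega_def ord_partitions_def)

lemma ord_partitionsD:
  assumes "W \<in> ord_partitions k D"
  shows "finite W" "card W = k" "\<And>A. A \<in> W \<Longrightarrow> A \<noteq> []" "\<And>A. A \<in> W \<Longrightarrow> distinct A"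
    "\<And>A B. A \<in> W \<Longrightarrow> B \<in> W \<Longrightarrow> A \<noteq> B \<Longrightarrow> set A \<inter> set B = {}" "(\<Union>A\<in>W. set A) = D"
  using assms by (simp_all add: ord_partitions_def)

lemma finite_ord_partitions:
  assumes "finite D"
  shows "finite (ord_partitions k D)"
proof (rule finite_subset)
  show "ord_partitions k D \<subseteq> Pow (distinct_words D)"
    by (auto simp: ord_partitions_def distinct_words_def)
  show "finite (Pow (distinct_words D))"
    using assms by (simp add: finite_distinct_words)
qed

lemma ord_partitions_0: "ord_partitions 0 D = (if D = {} then {{}} else {})"
  by (auto simp: ord_partitions_def)

lemma ord_partitions_insert:
  assumes "u \<in> distinct_words D" "u \<noteq> []" "W \<in> ord_partitions k (D - set u)"
  shows "u \<notin> W" "insert u W \<in> ord_partitions (Suc k) D"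
proof -
  show "u \<notin> W"
  proof
    assume "u \<in> W"
    then have "set u \<subseteq> D - set u"
      using ord_partitionsD(6)[OF assms(3)] by blast
    then show False
      using assms(2) by (cases u) auto
  qed
  then show "insert u W \<in> ord_partitions (Suc k) D"
    using assms by (auto simp: ord_partitions_def distinct_words_def)
qed

lemma ord_partitions_remove:
  assumes "W \<in> ord_partitions (Suc k) D" "u \<in> W"
  shows "u \<in> distinct_words D" "u \<noteq> []" "W - {u} \<in> ord_partitions k (D - set u)"
  using assms by (auto simp: ord_partitions_def distinct_words_def)

lemma bij_betw_insert_block:
  "bij_betw (\<lambda>(u, W). (insert u W, u))
     (SIGMA u:distinct_words D - {[]}. ord_partitions k (D - set u))
     (SIGMA W:ord_partitions (Suc k) D. W)" (is "bij_betw ?f ?A ?B")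
proof (rule bij_betw_byWitness[where f'="\<lambda>(W, u). (u, W - {u})"])
  show "\<forall>a\<in>?A. (\<lambda>(W, u). (u, W - {u})) (?f a) = a"
    by (auto dest: ord_partitions_insert(1))
  show "\<forall>b\<in>?B. ?f ((\<lambda>(W, u). (u, W - {u})) b) = b"
    by (auto simp: insert_absorb)
  show "?f ` ?A \<subseteq> ?B"
    by (auto intro: ord_partitions_insert(2))
  show "(\<lambda>(W, u). (u, W - {u})) ` ?B \<subseteq> ?A"
    by (auto dest: ord_partitions_remove)
qed

lemma ord_partitions_subset_eq:
  assumes "W \<in> ord_partitions j D" "W' \<in> ord_partitions k D" "W' \<subseteq> W"
  shows "W' = W"
proof (rule ccontr)
  assume "W' \<noteq> W"
  then obtain A where A: "A \<in> W" "A \<notin> W'"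
    using assms(3) by blast
  then obtain x where x: "x \<in> set A"
    using ord_partitionsD(3)[OF assms(1)] by (cases A) auto
  then obtain B where "B \<in> W'" "x \<in> set B"
    using ord_partitionsD(6)[OF assms(1)] ord_partitionsD(6)[OF assms(2)] A(1) by blast
  then show False
    using ord_partitionsD(5)[OF assms(1) A(1), of B] assms(3) A x by auto
qed

definition sym_prod :: "nat list set \<Rightarrow> 'a::semiring_1 fpoly" where
  "sym_prod W = (\<Sum>L\<in>permutations_of_set W. monom (concat L))"

definition block_sum :: "nat list set \<Rightarrow> 'a::semiring_1 fpoly" where
  "block_sum W = (\<Sum>A\<in>W. monom A)"

lemma coeff_sym_prod: "coeff (sym_prod W) = P_O W"
  by (auto simp: sym_prod_def P_O_def permutations_of_set_def fun_eq_iff lookup_sum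
      lookup_single when_def ncmon_def intro!: sum.cong)

lemma sym_prod_empty [simp]: "sym_prod {} = 1"
  by (simp add: sym_prod_def)

lemma sym_prod_rec:
  assumes "finite W" "W \<noteq> {}"
  shows "sym_prod W = (\<Sum>u\<in>W. monom u * sym_prod (W - {u}))"
proof -
  have "sym_prod W = (\<Sum>u\<in>W. \<Sum>L\<in>(#) u ` permutations_of_set (W - {u}). monom (concat L))"
    unfolding sym_prod_def permutations_of_set_nonempty[OF assms(2)]
    by (rule sum.UNION_disjoint) (auto simp: assms)
  also have "\<dots> = (\<Sum>u\<in>W. monom u * sym_prod (W - {u}))"
    by (simp add: sum.reindex sym_prod_def sum_distrib_left single_mult_single)
  finally show ?thesis .
qed

lemma coeff_block_sum: "finite W \<Longrightarrow> coeff (block_sum W) v = (if v \<in> W then 1 else 0)"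
  by (simp add: block_sum_def lookup_sum lookup_single when_def)

lemma sum_ord_partitions_Suc:
  assumes "finite D"
  shows "(\<Sum>u\<in>distinct_words D - {[]}. \<Sum>W\<in>ord_partitions k (D - set u). F (insert u W) u) =
    (\<Sum>W\<in>ord_partitions (Suc k) D. \<Sum>u\<in>W. F W u)"
proof -
  have "(\<Sum>u\<in>distinct_words D - {[]}. \<Sum>W\<in>ord_partitions k (D - set u). F (insert u W) u) =
      (\<Sum>(u, W)\<in>(SIGMA u:distinct_words D - {[]}. ord_partitions k (D - set u)). F (insert u W) u)"
    using assms by (intro sum.Sigma) (simp_all add: finite_distinct_words finite_ord_partitions)
  also have "\<dots> = (\<Sum>(W, u)\<in>(SIGMA W:ord_partitions (Suc k) D. W). F W u)"
    using sum.reindex_bij_betw[OF bij_betw_insert_block, of "\<lambda>(W, u). F W u" D k]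
    by (simp add: case_prod_unfold)
  also have "\<dots> = (\<Sum>W\<in>ord_partitions (Suc k) D. \<Sum>u\<in>W. F W u)"
    using assms by (intro sum.Sigma[symmetric]) (simp_all add: finite_ord_partitions ord_partitionsD(1))
  finally show ?thesis .
qed

lemma multilin_part_power:
  fixes g :: "'a::field fpoly"
  assumes "finite D" "coeff g [] = 0"
  shows "multilin_part D (g ^ k) = (\<Sum>W\<in>ord_partitions k D. smult (\<Prod>A\<in>W. coeff g A) (sym_prod W))"
  using assms(1)
proof (induction k arbitrary: D)
  case 0
  then show ?case
    by (simp add: multilin_part_1 ord_partitions_0)
next
  case (Suc k)
  let ?U = "distinct_words D - {[]}"
  define F where "F W u = smult (\<Prod>A\<in>W. coeff g A) (monom u * sym_prod (W - {u}) :: 'a fpoly)" for W u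
  have "multilin_part D (g ^ Suc k) =
      (\<Sum>u\<in>?U. smult (coeff g u) (monom u * multilin_part (D - set u) (g ^ k)))"
    using Suc.prems assms(2) finite_distinct_words[OF Suc.prems]
    by (simp add: multilin_part_mult sum.remove[of _ "[]"] distinct_words_def)
  also have "\<dots> = (\<Sum>u\<in>?U. \<Sum>W\<in>ord_partitions k (D - set u). F (insert u W) u)"
  proof (rule sum.cong[OF refl])
    fix u assume u: "u \<in> ?U"
    have "F (insert u W) u = smult (coeff g u * (\<Prod>A\<in>W. coeff g A)) (monom u * sym_prod W)"
      if "W \<in> ord_partitions k (D - set u)" for W
      using ord_partitions_insert(1)[of u D W k] u that ord_partitionsD(1)[OF that]
      by (simp add: F_def)
    then show "smult (coeff g u) (monom u * multilin_part (D - set u) (g ^ k)) =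
        (\<Sum>W\<in>ord_partitions k (D - set u). F (insert u W) u)"
      using Suc.prems by (simp add: Suc.IH sum_distrib_left smult_mult_right fpoly.scale_sum_right)
  qed
  also have "\<dots> = (\<Sum>W\<in>ord_partitions (Suc k) D. \<Sum>u\<in>W. F W u)"
    by (rule sum_ord_partitions_Suc[OF Suc.prems])
  also have "\<dots> = (\<Sum>W\<in>ord_partitions (Suc k) D. smult (\<Prod>A\<in>W. coeff g A) (sym_prod W))"
  proof (rule sum.cong[OF refl])
    fix W assume W: "W \<in> ord_partitions (Suc k) D"
    then have "finite W" "W \<noteq> {}"
      using ord_partitionsD(1,2)[OF W] by auto
    then show "(\<Sum>u\<in>W. F W u) = smult (\<Prod>A\<in>W. coeff g A) (sym_prod W)"
      by (simp add: F_def sym_prod_rec fpoly.scale_sum_right)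
  qed
  finally show ?case .
qed

lemma multilin_part_block_sum_power:
  assumes "finite D" "finite W" "[] \<notin> W"
  shows "multilin_part D (block_sum W ^ k :: 'a::field fpoly) =
    (\<Sum>W'\<in>{W'\<in>ord_partitions k D. W' \<subseteq> W}. sym_prod W')"
proof -
  have "(\<Prod>A\<in>W'. coeff (block_sum W :: 'a fpoly) A) = (if W' \<subseteq> W then 1 else 0)"
    if "finite W'" for W'
    using that assms(2) by (auto simp: coeff_block_sum intro!: prod.neutral prod_zero)
  then have "multilin_part D (block_sum W ^ k :: 'a fpoly) =
      (\<Sum>W'\<in>ord_partitions k D. if W' \<subseteq> W then sym_prod W' else 0)"
    using assms by (auto simp: multilin_part_power coeff_block_sum ord_partitionsD(1) intro!: sum.cong)
  then show ?thesis
    using assms(1) by (simp add: sum.inter_filter finite_ord_partitions)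
qed

lemma multilin_part_block_sum_power_eq:
  assumes "finite D" "W \<in> ord_partitions j D"
  shows "multilin_part D (block_sum W ^ k :: 'a::field fpoly) = (if k = j then sym_prod W else 0)"
proof -
  have "{W'\<in>ord_partitions k D. W' \<subseteq> W} = (if k = j then {W} else {})"
    using ord_partitions_subset_eq[OF assms(2)] ord_partitionsD(2)[OF assms(2)] assms(2)
    by (auto dest: ord_partitionsD(2))
  moreover have "multilin_part D (block_sum W ^ k :: 'a fpoly) =
      (\<Sum>W'\<in>{W'\<in>ord_partitions k D. W' \<subseteq> W}. sym_prod W')"
    by (rule multilin_part_block_sum_power) (use assms(1) ord_partitionsD(1,3)[OF assms(2)] in auto)
  ultimately show ?thesis
    by simp
qed

lemma multilin_part_block_sum_power_eq_0:
  assumes "finite D" "finite W" "[] \<notin> W" "card W < k"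
  shows "multilin_part D (block_sum W ^ k :: 'a::field fpoly) = 0"
proof -
  have "k \<le> card W" if "W' \<in> ord_partitions k D" "W' \<subseteq> W" for W'
    using card_mono[OF assms(2) that(2)] ord_partitionsD(2)[OF that(1)] by simp
  then have none: "{W'\<in>ord_partitions k D. W' \<subseteq> W} = {}"
    using assms(4) by force
  have "multilin_part D (block_sum W ^ k :: 'a fpoly) =
      (\<Sum>W'\<in>{W'\<in>ord_partitions k D. W' \<subseteq> W}. sym_prod W')"
    by (rule multilin_part_block_sum_power) (use assms in auto)
  then show ?thesis
    unfolding none by simp
qed

definition sym_span :: "nat \<Rightarrow> nat set \<Rightarrow> 'a::field fpoly set" where
  "sym_span n D = fpoly.span (sym_prod ` ord_partitions n D)"

lemma multilin_part_power_in_sym_span: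
  assumes "finite D" "coeff g [] = 0"
  shows "multilin_part D (g ^ k) \<in> sym_span k D"
  unfolding multilin_part_power[OF assms] sym_span_def
  by (intro fpoly.span_sum fpoly.span_scale fpoly.span_base) auto

section \<open>Reducing the number of blocks\<close>

lemma power_add_square_expand:
  fixes y :: "'b::ring_1"
  shows "\<exists>r. (y + y * y) ^ k = y ^ k + of_nat k * y ^ Suc k + r * y ^ Suc (Suc k)"
proof (induction k)
  case 0
  show ?case by (rule exI[of _ 0]) simp
next
  case (Suc k)
  then obtain r where r: "(y + y * y) ^ k = y ^ k + of_nat k * y ^ Suc k + r * y ^ Suc (Suc k)"
    by blast
  have pow: "y ^ j * y = y ^ Suc j" "y ^ j * (y * t) = y ^ Suc j * t" "y * y ^ j = y ^ Suc j" for j t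
    by (simp_all add: mult.assoc[symmetric] power_commutes)
  have "(y + y * y) ^ Suc k = (y ^ k + of_nat k * y ^ Suc k + r * y ^ Suc (Suc k)) * (y + y * y)"
    by (simp only: power_Suc2 r)
  also have "\<dots> = y ^ Suc k + of_nat (Suc k) * y ^ Suc (Suc k)
      + (of_nat k + r + r * y) * y ^ Suc (Suc (Suc k))"
    by (simp only: distrib_left distrib_right mult.assoc pow of_nat_Suc mult_1_left add_ac)
  finally show ?case by blast
qed

text \<open>A symmetrised product with k + 1 blocks is, up to the factor k, the multilinear
  part of (y + y^2)^k with y the sum of its blocks; this is where characteristic zero is used.\<close>

lemma sym_prod_in_sym_span:
  assumes "1 \<le> n" "n \<le> k" "finite D" "W \<in> ord_partitions k D"
  shows "(sym_prod W :: 'a::field_char_0 fpoly) \<in> sym_span n D"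
  using assms(2,4)
proof (induction k arbitrary: W rule: dec_induct)
  case base
  then show ?case by (simp add: sym_span_def fpoly.span_base)
next
  case (step k)
  define y :: "'a fpoly" where "y = block_sum W"
  obtain r where r: "(y + y * y) ^ k = y ^ k + of_nat k * y ^ Suc k + r * y ^ Suc (Suc k)"
    using power_add_square_expand by blast
  have W: "finite W" "[] \<notin> W" "card W = Suc k"
    using ord_partitionsD(1-3)[OF step.prems] by auto
  have y0: "coeff y [] = 0"
    using W by (simp add: y_def coeff_block_sum)
  have "multilin_part D (r * y ^ j) = 0" if "Suc k < j" for j
  proof -
    have "multilin_part (D - set u) (y ^ j) = 0" for u
      using W assms(3) that by (simp add: y_def multilin_part_block_sum_power_eq_0)
    then show ?thesis
      using assms(3) by (simp add: multilin_part_mult)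
  qed
  moreover have "multilin_part D (y ^ j) = (if j = Suc k then sym_prod W else 0)" for j
    using assms(3) step.prems by (simp add: y_def multilin_part_block_sum_power_eq)
  ultimately have "smult (of_nat k) (sym_prod W) = multilin_part D ((y + y * y) ^ k)"
    by (simp del: power_Suc add: r multilin_part_add multilin_part_smult of_nat_mult_eq_smult)
  also have "\<dots> \<in> sym_span k D"
    using assms(3) y0 by (intro multilin_part_power_in_sym_span) (simp_all add: lookup_add coeff_mult)
  also have "(sym_span k D :: 'a fpoly set) \<subseteq> sym_span n D"
    unfolding sym_span_def[of k] using step.IH by (intro fpoly.span_minimal) (auto simp: sym_span_def)
  finally have "smult (inverse (of_nat k)) (smult (of_nat k) (sym_prod W :: 'a fpoly)) \<in> sym_span n D"
    unfolding sym_span_def by (rule fpoly.span_scale)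
  then show ?case
    using step.hyps assms(1) by simp
qed

lemma sym_span_mono:
  assumes "1 \<le> n" "n \<le> k" "finite D"
  shows "(sym_span k D :: 'a::field_char_0 fpoly set) \<subseteq> sym_span n D"
  unfolding sym_span_def[of k]
  using sym_prod_in_sym_span[OF assms] by (intro fpoly.span_minimal) (auto simp: sym_span_def)

section \<open>Left multiplication by a monomial\<close>

definition counts_satisfy :: "nat \<Rightarrow> (nat \<Rightarrow> bool) \<Rightarrow> 'a::zero fpoly \<Rightarrow> bool" where
  "counts_satisfy x Q P \<longleftrightarrow> (\<forall>v\<in>Poly_Mapping.keys P. Q (count_list v x))"

lemma counts_satisfy_0 [simp]: "counts_satisfy x Q 0"
  by (simp add: counts_satisfy_def)

lemma counts_satisfy_add:
  "counts_satisfy x Q P \<Longrightarrow> counts_satisfy x Q P' \<Longrightarrow> counts_satisfy x Q (P + P')"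
  unfolding counts_satisfy_def using keys_add[of P P'] by blast

lemma counts_satisfy_diff:
  fixes P P' :: "'a::ab_group_add fpoly"
  shows "counts_satisfy x Q P \<Longrightarrow> counts_satisfy x Q P' \<Longrightarrow> counts_satisfy x Q (P - P')"
  unfolding counts_satisfy_def by (metis in_keys_iff lookup_minus diff_zero diff_self)

lemma counts_satisfy_mult:
  fixes P P' :: "'a::semiring_0 fpoly"
  assumes "counts_satisfy x Q1 P" "counts_satisfy x Q2 P'" "\<And>i j. Q1 i \<Longrightarrow> Q2 j \<Longrightarrow> Q3 (i + j)"
  shows "counts_satisfy x Q3 (P * P')"
  unfolding counts_satisfy_def
proof
  fix v assume "v \<in> Poly_Mapping.keys (P * P')"
  then obtain a b where "v = a @ b" "a \<in> Poly_Mapping.keys P" "b \<in> Poly_Mapping.keys P'"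
    using keys_mult[of P P'] by (auto simp: plus_list_def)
  then show "Q3 (count_list v x)"
    using assms unfolding counts_satisfy_def by simp
qed

lemma counts_satisfy_mono: "counts_satisfy x Q P \<Longrightarrow> (\<And>i. Q i \<Longrightarrow> Q' i) \<Longrightarrow> counts_satisfy x Q' P"
  unfolding counts_satisfy_def by blast

lemma counts_satisfy_any: "counts_satisfy x (\<lambda>_. True) P"
  by (simp add: counts_satisfy_def)

lemma counts_satisfy_1: "counts_satisfy x (\<lambda>i. i = 0) (1 :: 'a::semiring_1 fpoly)"
  by (simp add: counts_satisfy_def zero_list_def)

lemma counts_satisfy_power_diff:
  fixes y b :: "'a::ring_1 fpoly"
  assumes "counts_satisfy x (\<lambda>i. i = 0) y" "counts_satisfy x (\<lambda>i. 1 \<le> i) b"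
  shows "counts_satisfy x (\<lambda>i. 1 \<le> i) ((y + b) ^ j - y ^ j)"
proof (induction j)
  case (Suc j)
  have "(y + b) ^ Suc j - y ^ Suc j = y * ((y + b) ^ j - y ^ j) + b * (y + b) ^ j"
    by (simp add: algebra_simps)
  then show ?case
    using counts_satisfy_mult[OF assms(1) Suc.IH] counts_satisfy_mult[OF assms(2) counts_satisfy_any]
    by (simp add: counts_satisfy_add)
qed simp

text \<open>Keeping only the words in which x occurs exactly once, both \<open>(y + a) ^ Suc j\<close> and
  \<open>(y + y * a) ^ j + a * y ^ j\<close> become the sum of \<open>y ^ i * a * y ^ (j - i)\<close> over \<open>i \<le> j\<close>.\<close>

lemma counts_satisfy_single_occurrence_cancel:
  fixes y a :: "'a::ring_1 fpoly"
  assumes y: "counts_satisfy x (\<lambda>i. i = 0) y" and a: "counts_satisfy x (\<lambda>i. i = 1) a"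
  shows "counts_satisfy x (\<lambda>i. i \<noteq> 1) ((y + a) ^ Suc j - (y + y * a) ^ j - a * y ^ j)"
proof (induction j)
  case 0
  show ?case
    using counts_satisfy_diff[OF y counts_satisfy_1] by (simp add: counts_satisfy_mono)
next
  case (Suc j)
  have ya: "counts_satisfy x (\<lambda>i. i = 1) (y * a)"
    by (rule counts_satisfy_mult[OF y a]) simp
  have eq: "(y + a) ^ Suc (Suc j) - (y + y * a) ^ Suc j - a * y ^ Suc j =
      y * ((y + a) ^ Suc j - (y + y * a) ^ j - a * y ^ j) + a * ((y + a) ^ Suc j - y ^ Suc j)
      - (y * a) * ((y + y * a) ^ j - y ^ j)"
    by (simp add: algebra_simps)
  have "counts_satisfy x (\<lambda>i. i \<noteq> 1) (y * ((y + a) ^ Suc j - (y + y * a) ^ j - a * y ^ j))"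
    by (rule counts_satisfy_mult[OF y Suc.IH]) simp
  moreover have "counts_satisfy x (\<lambda>i. i \<noteq> 1) (a * ((y + a) ^ Suc j - y ^ Suc j))"
    by (rule counts_satisfy_mult[OF a counts_satisfy_power_diff[OF y counts_satisfy_mono[OF a]]]) auto
  moreover have "counts_satisfy x (\<lambda>i. i \<noteq> 1) ((y * a) * ((y + y * a) ^ j - y ^ j))"
    by (rule counts_satisfy_mult[OF ya counts_satisfy_power_diff[OF y counts_satisfy_mono[OF ya]]]) auto
  ultimately show ?case
    unfolding eq by (intro counts_satisfy_diff counts_satisfy_add)
qed

lemma count_list_distinct: "distinct v \<Longrightarrow> x \<in> set v \<Longrightarrow> count_list v x = 1"
  by (induction v) (auto simp: count_list_0_iff)

lemma multilin_part_eq_0_if_counts: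
  assumes "x \<in> D" "counts_satisfy x (\<lambda>i. i \<noteq> 1) P"
  shows "multilin_part D P = 0"
proof (rule poly_mapping_eqI)
  fix v
  have "coeff P v = 0" if "distinct v" "set v = D"
    using that assms count_list_distinct[of v x] by (auto simp: counts_satisfy_def in_keys_iff)
  then show "coeff (multilin_part D P) v = coeff 0 v"
    by (simp add: coeff_multilin_part)
qed

lemma monom_mult_sym_prod_eq:
  assumes "finite D" "u \<in> distinct_words D" "u \<noteq> []"
    and W: "W \<in> ord_partitions n (D - set u)"
  shows "(monom u * sym_prod W :: 'a::field fpoly) =
    multilin_part D ((block_sum W + monom u) ^ Suc n)
    - multilin_part D ((block_sum W + block_sum W * monom u) ^ n)"
proof -
  define y :: "'a fpoly" where "y = block_sum W"
  define a :: "'a fpoly" where "a = monom u"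
  have x: "hd u \<in> set u" "hd u \<in> D"
    using assms(2,3) by (auto simp: distinct_words_def)
  have "hd u \<notin> set v" if "v \<in> W" for v
    using ord_partitionsD(6)[OF W] that x(1) by blast
  then have cy: "counts_satisfy (hd u) (\<lambda>i. i = 0) y"
    using ord_partitionsD(1)[OF W]
    by (auto simp: counts_satisfy_def y_def coeff_block_sum in_keys_iff count_list_0_iff split: if_splits)
  have ca: "counts_satisfy (hd u) (\<lambda>i. i = 1) a"
    using assms(2) x(1) by (simp add: counts_satisfy_def a_def distinct_words_def count_list_distinct)
  have "multilin_part D ((y + a) ^ Suc n - (y + y * a) ^ n - a * y ^ n) = 0"
    by (rule multilin_part_eq_0_if_counts[OF x(2) counts_satisfy_single_occurrence_cancel[OF cy ca]])
  moreover have "multilin_part D (a * y ^ n) = a * sym_prod W"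
    using assms(1,2) W by (simp add: a_def y_def multilin_part_single_mult multilin_part_block_sum_power_eq)
  ultimately show ?thesis
    by (simp add: multilin_part_diff a_def y_def)
qed

lemma monom_mult_sym_prod_in_sym_span:
  assumes "1 \<le> n" "finite D" "u \<in> distinct_words D" "u \<noteq> []" "W \<in> ord_partitions n (D - set u)"
  shows "(monom u * sym_prod W :: 'a::field_char_0 fpoly) \<in> sym_span n D"
proof -
  let ?y = "block_sum W :: 'a fpoly" and ?a = "monom u :: 'a fpoly"
  have coeffs: "coeff ?y [] = 0" "coeff ?a [] = 0"
    using ord_partitionsD(1,3)[OF assms(5)] assms(4) by (auto simp: coeff_block_sum lookup_single)
  then have "multilin_part D ((?y + ?a) ^ Suc n) \<in> sym_span (Suc n) D"
    by (intro multilin_part_power_in_sym_span[OF assms(2)]) (simp add: lookup_add)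
  then have "multilin_part D ((?y + ?a) ^ Suc n) \<in> sym_span n D"
    using sym_span_mono[OF assms(1) _ assms(2), of "Suc n"] by auto
  moreover have "multilin_part D ((?y + ?y * ?a) ^ n) \<in> sym_span n D"
    using coeffs assms(2) by (intro multilin_part_power_in_sym_span) (simp_all add: lookup_add coeff_mult)
  ultimately show ?thesis
    unfolding monom_mult_sym_prod_eq[OF assms(2-5)] sym_span_def by (rule fpoly.span_diff)
qed

lemma monom_mult_sym_span:
  assumes "1 \<le> n" "finite D" "u \<in> distinct_words D" "u \<noteq> []" "X \<in> sym_span n (D - set u)"
  shows "(monom u * X :: 'a::field_char_0 fpoly) \<in> sym_span n D"
  using assms(5) unfolding sym_span_def[of n "D - set u"]
proof (induction rule: fpoly.span_induct_alt)
  case base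
  then show ?case by (simp add: sym_span_def fpoly.span_zero)
next
  case (step c Z X)
  then have "monom u * Z \<in> sym_span n D"
    using monom_mult_sym_prod_in_sym_span[OF assms(1-4)] by auto
  then show ?case
    using step.IH unfolding sym_span_def
    by (simp add: distrib_left smult_mult_right fpoly.span_add fpoly.span_scale)
qed

section \<open>Polynomials with spanned multilinear parts\<close>

definition multilin_spanned :: "nat \<Rightarrow> 'a::field fpoly \<Rightarrow> bool" where
  "multilin_spanned n P \<longleftrightarrow> (\<forall>D. finite D \<longrightarrow> multilin_part D P \<in> sym_span n D)"

lemma multilin_spanned_0: "multilin_spanned n 0"
  by (simp add: multilin_spanned_def sym_span_def fpoly.span_zero)

lemma multilin_spanned_add:
  "multilin_spanned n P \<Longrightarrow> multilin_spanned n Q \<Longrightarrow> multilin_spanned n (P + Q)"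
  by (simp add: multilin_spanned_def sym_span_def multilin_part_add fpoly.span_add)

lemma multilin_spanned_smult: "multilin_spanned n P \<Longrightarrow> multilin_spanned n (smult c P)"
  by (simp add: multilin_spanned_def sym_span_def multilin_part_smult fpoly.span_scale)

lemma multilin_spanned_power: "coeff g [] = 0 \<Longrightarrow> multilin_spanned n (g ^ n)"
  by (simp add: multilin_spanned_def multilin_part_power_in_sym_span)

lemma multilin_spanned_mult_left:
  assumes "1 \<le> n" "coeff A [] = 0" "multilin_spanned n P"
  shows "multilin_spanned n (A * P :: 'a::field_char_0 fpoly)"
  unfolding multilin_spanned_def
proof (intro allI impI)
  fix D :: "nat set"
  assume D: "finite D"
  have "smult (coeff A u) (monom u * multilin_part (D - set u) P) \<in> sym_span n D"
    if "u \<in> distinct_words D" for u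
  proof (cases "u = []")
    case False
    then have "monom u * multilin_part (D - set u) P \<in> sym_span n D"
      using assms(3) D that by (intro monom_mult_sym_span[OF assms(1) D]) (simp_all add: multilin_spanned_def)
    then show ?thesis
      unfolding sym_span_def by (rule fpoly.span_scale)
  qed (simp add: assms(2) sym_span_def fpoly.span_zero)
  then show "multilin_part D (A * P) \<in> sym_span n D"
    unfolding multilin_part_mult[OF D] sym_span_def by (rule fpoly.span_sum)
qed

text \<open>Word reversal is an anti-automorphism; it reduces right multiplication to left
  multiplication.\<close>

definition reverse :: "'a::zero fpoly \<Rightarrow> 'a fpoly" where
  "reverse P = Poly_Mapping.map_key rev P"

lemma coeff_reverse [simp]: "coeff (reverse P) w = coeff P (rev w)"
  by (simp add: reverse_def Poly_Mapping.map_key.rep_eq)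

lemma reverse_add: "reverse (P + Q) = reverse P + reverse Q"
  by (rule poly_mapping_eqI) (simp add: lookup_add)

lemma reverse_smult: "reverse (smult c P) = smult c (reverse P)"
  by (rule poly_mapping_eqI) simp

lemma reverse_reverse [simp]: "reverse (reverse P) = P"
  by (rule poly_mapping_eqI) simp

lemma reverse_0 [simp]: "reverse 0 = 0"
  by (rule poly_mapping_eqI) simp

lemma reverse_sum: "reverse (sum f I) = (\<Sum>i\<in>I. reverse (f i))"
  by (induction I rule: infinite_finite_induct) (simp_all add: reverse_add)

lemma reverse_single: "reverse (Poly_Mapping.single u c) = Poly_Mapping.single (rev u) c"
  by (rule poly_mapping_eqI) (auto simp: lookup_single when_def)

lemma reverse_mult:
  fixes P Q :: "'a::comm_semiring_0 fpoly"
  shows "reverse (P * Q) = reverse Q * reverse P"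
proof (rule poly_mapping_eqI)
  fix w
  have "coeff (P * Q) (rev w) = (\<Sum>k\<le>length w. coeff P (rev (drop (length w - k) w)) * coeff Q (rev (take (length w - k) w)))"
    by (auto simp: coeff_mult rev_take rev_drop intro!: sum.cong)
  also have "\<dots> = (\<Sum>k\<le>length w. coeff Q (rev (take k w)) * coeff P (rev (drop k w)))"
    using sum.atLeastAtMost_rev[of "\<lambda>k. coeff Q (rev (take k w)) * coeff P (rev (drop k w))" 0 "length w"]
    by (simp add: atLeast0AtMost mult.commute)
  finally show "coeff (reverse (P * Q)) w = coeff (reverse Q * reverse P) w"
    by (simp add: coeff_mult)
qed

lemma multilin_part_reverse: "multilin_part D (reverse P) = reverse (multilin_part D P)"
  by (rule poly_mapping_eqI) (simp add: coeff_multilin_part)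

lemma reverse_sym_prod: "reverse (sym_prod W) = sym_prod (rev ` W)"
proof -
  have "reverse (sym_prod W) = (\<Sum>L\<in>permutations_of_set W. monom (concat (map rev (rev L))))"
    by (simp add: sym_prod_def reverse_sum reverse_single rev_concat)
  also have "\<dots> = (\<Sum>L\<in>rev ` permutations_of_set W. monom (concat (map rev L)))"
    by (subst sum.reindex) (simp_all add: o_def)
  also have "\<dots> = sym_prod (rev ` W)"
    by (simp add: sym_prod_def permutations_of_set_image_inj sum.reindex inj_on_def inj_map_eq_map)
  finally show ?thesis .
qed

lemma ord_partitions_image_rev: "W \<in> ord_partitions k D \<Longrightarrow> rev ` W \<in> ord_partitions k D"
  by (auto simp: ord_partitions_def card_image)

lemma reverse_sym_span: "X \<in> sym_span n D \<Longrightarrow> reverse X \<in> sym_span n D"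
  unfolding sym_span_def
proof (induction rule: fpoly.span_induct_alt)
  case (step c Z X)
  then obtain W where "W \<in> ord_partitions n D" "Z = sym_prod W"
    by blast
  then have "reverse Z \<in> fpoly.span (sym_prod ` ord_partitions n D)"
    by (auto simp: reverse_sym_prod intro: fpoly.span_base ord_partitions_image_rev)
  then show ?case
    using step.IH by (simp add: reverse_add reverse_smult fpoly.span_add fpoly.span_scale)
qed (simp add: fpoly.span_zero)

lemma multilin_spanned_reverse: "multilin_spanned n P \<Longrightarrow> multilin_spanned n (reverse P)"
  by (simp add: multilin_spanned_def multilin_part_reverse reverse_sym_span)

lemma multilin_spanned_mult_right:
  assumes "1 \<le> n" "coeff A [] = 0" "multilin_spanned n P"
  shows "multilin_spanned n (P * A :: 'a::field_char_0 fpoly)"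
proof -
  have "multilin_spanned n (reverse A * reverse P)"
    using assms by (intro multilin_spanned_mult_left multilin_spanned_reverse) simp_all
  then show ?thesis
    using multilin_spanned_reverse by (fastforce simp: reverse_mult)
qed

section \<open>T-ideals\<close>

lemma ncendo_ncpolys: "is_ncendo \<phi> \<Longrightarrow> p \<in> ncpolys \<Longrightarrow> \<phi> p \<in> ncpolys"
  by (auto simp: is_ncendo_def)

lemma ncendo_ncadd:
  "is_ncendo \<phi> \<Longrightarrow> p \<in> ncpolys \<Longrightarrow> q \<in> ncpolys \<Longrightarrow> \<phi> (ncadd p q) = ncadd (\<phi> p) (\<phi> q)"
  by (simp add: is_ncendo_def)

lemma ncendo_ncscale: "is_ncendo \<phi> \<Longrightarrow> p \<in> ncpolys \<Longrightarrow> \<phi> (ncscale c p) = ncscale c (\<phi> p)"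
  by (simp add: is_ncendo_def)

lemma ncendo_ncmult:
  "is_ncendo \<phi> \<Longrightarrow> p \<in> ncpolys \<Longrightarrow> q \<in> ncpolys \<Longrightarrow> \<phi> (ncmult p q) = ncmult (\<phi> p) (\<phi> q)"
  by (simp add: is_ncendo_def)

lemma ncendo_nczero:
  assumes "is_ncendo \<phi>"
  shows "\<phi> nczero = nczero"
proof -
  have "\<phi> (ncscale 0 nczero) = ncscale 0 (\<phi> nczero)"
    using assms nczero_in_ncpolys unfolding is_ncendo_def by blast
  then show ?thesis
    by (simp add: ncscale_def nczero_def)
qed

lemma ncendo_ncpow:
  assumes "is_ncendo \<phi>" "p \<in> ncpolys"
  shows "\<phi> (ncpow p (Suc k)) = ncpow (\<phi> p) (Suc k)"
proof (induction k)
  case (Suc k)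
  have "\<phi> (ncpow p (Suc (Suc k))) = ncmult (\<phi> p) (\<phi> (ncpow p (Suc k)))"
    using assms ncpow_in_ncpolys[OF assms(2)] by (simp add: is_ncendo_def)
  then show ?case
    by (simp add: Suc.IH)
qed simp

lemma is_ncendo_id: "is_ncendo id"
  by (simp add: is_ncendo_def)

lemma is_ncendo_comp: "is_ncendo \<phi> \<Longrightarrow> is_ncendo \<psi> \<Longrightarrow> is_ncendo (\<psi> \<circ> \<phi>)"
  unfolding is_ncendo_def by (auto simp: image_subset_iff)

lemma is_ncideal_ncpolys: "is_ncideal ncpolys"
  by (simp add: is_ncideal_def nczero_in_ncpolys ncadd_in_ncpolys ncscale_in_ncpolys ncmult_in_ncpolys)

lemma is_ncideal_Inter: "F \<noteq> {} \<Longrightarrow> (\<And>I. I \<in> F \<Longrightarrow> is_ncideal I) \<Longrightarrow> is_ncideal (\<Inter>F)"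
  unfolding is_ncideal_def by blast

lemma is_ncideal_endo_preimage:
  fixes G :: "'a::field ncpoly set"
  assumes G: "is_ncideal G"
  shows "is_ncideal {p \<in> ncpolys. \<forall>\<phi>. is_ncendo \<phi> \<longrightarrow> \<phi> p \<in> G}" (is "is_ncideal ?T")
  unfolding is_ncideal_def
proof (intro conjI ballI allI)
  show "?T \<subseteq> ncpolys"
    by blast
  show "nczero \<in> ?T"
    using G by (simp add: nczero_in_ncpolys ncendo_nczero is_ncideal_def)
next
  fix p q assume "p \<in> ?T" "q \<in> ?T"
  then show "ncadd p q \<in> ?T"
    using G by (auto simp: ncadd_in_ncpolys ncendo_ncadd is_ncideal_def)
next
  fix c p assume "p \<in> ?T"
  then show "ncscale c p \<in> ?T"
    using G by (auto simp: ncscale_in_ncpolys ncendo_ncscale is_ncideal_def)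
next
  fix p a :: "'a ncpoly" assume "p \<in> ?T" "a \<in> ncpolys"
  then show "ncmult a p \<in> ?T" "ncmult p a \<in> ?T"
    using G by (auto simp: ncmult_in_ncpolys ncendo_ncmult ncendo_ncpolys is_ncideal_def)
qed

lemma Tideal_pow_least:
  "is_ncideal I \<Longrightarrow> ncpow (ncvar 1) n \<in> I \<Longrightarrow> (\<And>\<phi>. is_ncendo \<phi> \<Longrightarrow> \<phi> ` I \<subseteq> I) \<Longrightarrow> Tideal_pow n \<subseteq> I"
  unfolding Tideal_pow_def by blast

lemma is_ncideal_Tideal_pow: "is_ncideal (Tideal_pow n)"
  unfolding Tideal_pow_def
proof (rule is_ncideal_Inter)
  have "ncpow (ncvar 1) n \<in> ncpolys"
    by (simp add: ncpow_in_ncpolys ncvar_in_ncpolys)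
  then show "{I. is_ncideal I \<and> ncpow (ncvar 1) n \<in> I \<and> (\<forall>\<phi>. is_ncendo \<phi> \<longrightarrow> \<phi> ` I \<subseteq> I)} \<noteq> {}"
    using is_ncideal_ncpolys by (auto simp: is_ncendo_def)
qed blast

lemma Tideal_pow_endo_closed: "is_ncendo \<phi> \<Longrightarrow> \<phi> ` Tideal_pow n \<subseteq> Tideal_pow n"
  unfolding Tideal_pow_def by blast

lemma ncpow_ncvar_in_Tideal_pow: "ncpow (ncvar 1) n \<in> Tideal_pow n"
  unfolding Tideal_pow_def by blast

lemma Tideal_pow_subset_ideal:
  assumes "is_ncideal G" "\<And>\<phi>. is_ncendo \<phi> \<Longrightarrow> \<phi> (ncpow (ncvar 1) n) \<in> G"
  shows "Tideal_pow n \<subseteq> G"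
proof -
  let ?T = "{p \<in> ncpolys. \<forall>\<phi>. is_ncendo \<phi> \<longrightarrow> \<phi> p \<in> G}"
  have "Tideal_pow n \<subseteq> ?T"
  proof (rule Tideal_pow_least)
    show "is_ncideal ?T"
      by (rule is_ncideal_endo_preimage[OF assms(1)])
    show "ncpow (ncvar 1) n \<in> ?T"
      using assms(2) by (simp add: ncpow_in_ncpolys ncvar_in_ncpolys)
    show "\<phi> ` ?T \<subseteq> ?T" if \<phi>: "is_ncendo \<phi>" for \<phi>
    proof
      fix q assume "q \<in> \<phi> ` ?T"
      then obtain p where p: "p \<in> ?T" "q = \<phi> p"
        by blast
      have "\<psi> (\<phi> p) \<in> G" if "is_ncendo \<psi>" for \<psi>
        using p(1) is_ncendo_comp[OF \<phi> that] by auto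
      then show "q \<in> ?T"
        using p ncendo_ncpolys[OF \<phi>] by auto
    qed
  qed
  also have "?T \<subseteq> G"
    using is_ncendo_id by auto
  finally show ?thesis .
qed

lemma is_ncideal_lookup_image:
  fixes S :: "'a::field fpoly set"
  assumes "\<And>P. P \<in> S \<Longrightarrow> admissible P" "0 \<in> S"
    and "\<And>P Q. P \<in> S \<Longrightarrow> Q \<in> S \<Longrightarrow> P + Q \<in> S" "\<And>c P. P \<in> S \<Longrightarrow> smult c P \<in> S"
    and "\<And>A P. admissible A \<Longrightarrow> P \<in> S \<Longrightarrow> A * P \<in> S \<and> P * A \<in> S"
  shows "is_ncideal (Poly_Mapping.lookup ` S)"
  unfolding is_ncideal_def
proof (intro conjI ballI allI)
  show "Poly_Mapping.lookup ` S \<subseteq> ncpolys"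
    using assms(1) lookup_in_ncpolys_iff by blast
  show "nczero \<in> Poly_Mapping.lookup ` S"
    using assms(2) by (simp add: nczero_lookup)
next
  fix p q assume "p \<in> Poly_Mapping.lookup ` S" "q \<in> Poly_Mapping.lookup ` S"
  then show "ncadd p q \<in> Poly_Mapping.lookup ` S"
    using assms(3) by (auto simp: ncadd_lookup)
next
  fix c p assume "p \<in> Poly_Mapping.lookup ` S"
  then show "ncscale c p \<in> Poly_Mapping.lookup ` S"
    using assms(4) by (auto simp: ncscale_lookup)
next
  fix p a :: "'a ncpoly" assume "p \<in> Poly_Mapping.lookup ` S" "a \<in> ncpolys"
  then show "ncmult a p \<in> Poly_Mapping.lookup ` S" "ncmult p a \<in> Poly_Mapping.lookup ` S"
    using assms(5) by (auto simp: ncmult_lookup elim!: ncpolysE)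
qed

lemma Tideal_pow_multilin_spanned:
  assumes "1 \<le> n" "p \<in> Tideal_pow n"
  obtains P :: "'a::field_char_0 fpoly" where "p = coeff P" "multilin_spanned n P"
proof -
  let ?S = "{P :: 'a fpoly. admissible P \<and> multilin_spanned n P}"
  have "Tideal_pow n \<subseteq> Poly_Mapping.lookup ` ?S"
  proof (rule Tideal_pow_subset_ideal)
    show "is_ncideal (Poly_Mapping.lookup ` ?S)"
      using assms(1)
      by (intro is_ncideal_lookup_image) (auto simp: admissible_add admissible_smult admissible_mult
          admissible_coeff_Nil multilin_spanned_0 multilin_spanned_add multilin_spanned_smult
          multilin_spanned_mult_left multilin_spanned_mult_right)
    fix \<phi> :: "'a ncpoly \<Rightarrow> 'a ncpoly"
    assume \<phi>: "is_ncendo \<phi>"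
    obtain k where n: "n = Suc k"
      using assms(1) by (cases n) auto
    have "\<phi> (ncvar 1) \<in> ncpolys"
      using \<phi> ncvar_in_ncpolys[of 1] by (auto simp: is_ncendo_def)
    then obtain g :: "'a fpoly" where g: "\<phi> (ncvar 1) = coeff g" "admissible g"
      by (rule ncpolysE)
    then have "\<phi> (ncpow (ncvar 1) n) = coeff (g ^ n)"
      using ncendo_ncpow[OF \<phi> ncvar_in_ncpolys] by (simp add: n ncpow_lookup)
    moreover have "g ^ n \<in> ?S"
      using g(2) admissible_power[of g k]
      by (simp add: n multilin_spanned_power admissible_coeff_Nil del: power_Suc)
    ultimately show "\<phi> (ncpow (ncvar 1) n) \<in> Poly_Mapping.lookup ` ?S"
      by simp
  qed
  then show ?thesis
    using assms(2) that by blast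
qed

lemma lookup_span_subset_ncspan:
  "Poly_Mapping.lookup ` fpoly.span G \<subseteq> ncspan (Poly_Mapping.lookup ` G)"
proof
  fix p assume "p \<in> Poly_Mapping.lookup ` fpoly.span G"
  then obtain X where X: "X \<in> fpoly.span G" "p = coeff X"
    by blast
  obtain t r where t: "finite t" "t \<subseteq> G" and "X = (\<Sum>a\<in>t. smult (r a) a)"
    using X(1) unfolding fpoly.span_explicit by (auto intro: that)
  then have p: "p = coeff (\<Sum>a\<in>t. smult (r a) a)"
    using X(2) by simp
  have inj: "inj_on Poly_Mapping.lookup t"
    by (simp add: inj_on_def)
  define c where "c g = r (inv_into t Poly_Mapping.lookup g)" for g
  have "p = (\<lambda>w. \<Sum>g\<in>Poly_Mapping.lookup ` t. c g * g w)"
    by (simp add: p c_def lookup_sum sum.reindex[OF inj] fun_eq_iff inv_into_f_f[OF inj])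
  then show "p \<in> ncspan (Poly_Mapping.lookup ` G)"
    unfolding ncspan_def using t by blast
qed

lemma Wnm_subset_ncspan:
  assumes "1 \<le> n"
  shows "(Wnm n m :: 'a::field_char_0 ncpoly set) \<subseteq> ncspan (P_O ` Omega n m)"
proof
  fix p :: "'a ncpoly"
  assume "p \<in> Wnm n m"
  then have V: "p \<in> Vmult m" and T: "p \<in> Tideal_pow n"
    by (auto simp: Wnm_def)
  obtain P :: "'a fpoly" where P: "p = coeff P" "multilin_spanned n P"
    by (rule Tideal_pow_multilin_spanned[OF assms T])
  have "multilin_part {1..m} P = P"
    using V P(1) by (intro poly_mapping_eqI) (auto simp: coeff_multilin_part Vmult_def)
  then have "p \<in> Poly_Mapping.lookup ` fpoly.span (sym_prod ` ord_partitions n {1..m})"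
    using P by (metis multilin_spanned_def sym_span_def finite_atLeastAtMost imageI)
  also have "\<dots> \<subseteq> ncspan (Poly_Mapping.lookup ` sym_prod ` ord_partitions n {1..m})"
    by (rule lookup_span_subset_ncspan)
  also have "Poly_Mapping.lookup ` sym_prod ` ord_partitions n {1..m} = P_O ` Omega n m"
    by (simp add: image_image coeff_sym_prod Omega_eq_ord_partitions)
  finally show "p \<in> ncspan (P_O ` Omega n m)" .
qed

section \<open>Substitution and inclusion-exclusion\<close>

definition subst_all :: "'a::field fpoly \<Rightarrow> 'a fpoly \<Rightarrow> 'a fpoly" where
  "subst_all g P = (\<Sum>v\<in>Poly_Mapping.keys P. smult (coeff P v) (g ^ length v))"

lemma subst_all_superset:
  assumes "finite K" "Poly_Mapping.keys P \<subseteq> K"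
  shows "subst_all g P = (\<Sum>v\<in>K. smult (coeff P v) (g ^ length v))"
  unfolding subst_all_def by (rule sum.mono_neutral_left[OF assms]) (auto simp: in_keys_iff)

lemma subst_all_add: "subst_all g (P + Q) = subst_all g P + subst_all g Q"
proof -
  let ?K = "Poly_Mapping.keys P \<union> Poly_Mapping.keys Q"
  have "subst_all g (P + Q) = (\<Sum>v\<in>?K. smult (coeff (P + Q) v) (g ^ length v))"
    by (rule subst_all_superset) (auto simp: keys_add)
  also have "\<dots> = subst_all g P + subst_all g Q"
    by (simp add: lookup_add fpoly.scale_left_distrib sum.distrib subst_all_superset[of ?K])
  finally show ?thesis .
qed

lemma subst_all_smult: "subst_all g (smult c P) = smult c (subst_all g P)"
proof -
  have "subst_all g (smult c P) = (\<Sum>v\<in>Poly_Mapping.keys P. smult (coeff (smult c P) v) (g ^ length v))"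
    by (rule subst_all_superset) (auto simp: in_keys_iff)
  then show ?thesis
    by (simp add: subst_all_def fpoly.scale_sum_right)
qed

lemma subst_all_single: "subst_all g (Poly_Mapping.single v c) = smult c (g ^ length v)"
  by (subst subst_all_superset[of "{v}"]) auto

lemma subst_all_0 [simp]: "subst_all g 0 = 0"
  by (simp add: subst_all_def)

lemma subst_all_sum: "subst_all g (sum f I) = (\<Sum>i\<in>I. subst_all g (f i))"
  by (induction I rule: infinite_finite_induct) (simp_all add: subst_all_add)

lemma subst_all_mult: "subst_all g (P * Q) = subst_all g P * subst_all g Q"
proof -
  have "P * Q = (\<Sum>v\<in>Poly_Mapping.keys P. \<Sum>v'\<in>Poly_Mapping.keys Q.
      Poly_Mapping.single (v @ v') (coeff P v * coeff Q v'))"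
    by (subst (1 2) fpoly_eq_sum_single) (simp add: sum_product single_mult_single)
  then have "subst_all g (P * Q) = (\<Sum>v\<in>Poly_Mapping.keys P. \<Sum>v'\<in>Poly_Mapping.keys Q.
      smult (coeff P v) (g ^ length v) * smult (coeff Q v') (g ^ length v'))"
    by (simp add: subst_all_sum subst_all_single power_add smult_mult_left smult_mult_right
        mult.commute[of "coeff P _"])
  also have "\<dots> = subst_all g P * subst_all g Q"
    by (simp add: subst_all_def sum_product)
  finally show ?thesis .
qed

lemma subst_all_power: "subst_all g (P ^ k) = subst_all g P ^ k"
proof (induction k)
  case 0
  have "subst_all g 1 = 1"
    using subst_all_single[of g "[]" 1] by simp
  then show ?case
    by simp
qed (simp add: subst_all_mult)

lemma admissible_subst_all:
  assumes "admissible g" "admissible P"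
  shows "admissible (subst_all g P)"
  unfolding subst_all_def
proof (intro admissible_sum admissible_smult)
  fix v assume "v \<in> Poly_Mapping.keys P"
  then obtain j where "length v = Suc j"
    using assms(2) by (cases v) (auto simp: admissible_def)
  then show "admissible (g ^ length v)"
    using admissible_power[OF assms(1)] by simp
qed

lemma is_ncendo_subst_all:
  assumes "admissible g"
  shows "is_ncendo (\<lambda>p. coeff (subst_all g (Abs_poly_mapping p)))"
  unfolding is_ncendo_def
  using assms
  by (auto elim!: ncpolysE simp: lookup_in_ncpolys_iff admissible_subst_all lookup_inverse
      ncadd_lookup ncscale_lookup ncmult_lookup subst_all_add subst_all_smult subst_all_mult)

lemma power_in_Tideal_pow:
  assumes "1 \<le> n" "admissible g"
  shows "coeff (g ^ n) \<in> Tideal_pow n"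
proof -
  let ?\<phi> = "\<lambda>p. coeff (subst_all g (Abs_poly_mapping p))"
  obtain k where n: "n = Suc k"
    using assms(1) by (cases n) auto
  have xn: "ncpow (ncvar 1) n = coeff (monom [1] ^ n)"
    by (simp add: n ncvar_def ncmon_lookup ncpow_lookup del: power_Suc)
  have "?\<phi> (ncpow (ncvar 1) n) = coeff (g ^ n)"
    unfolding xn by (simp add: lookup_inverse subst_all_power subst_all_single)
  then show ?thesis
    using Tideal_pow_endo_closed[OF is_ncendo_subst_all[OF assms(2)]] ncpow_ncvar_in_Tideal_pow
    by (metis image_subset_iff)
qed

lemma power_sum_eq_sum_lists:
  fixes f :: "'b \<Rightarrow> 'a::semiring_1"
  assumes "finite S"
  shows "(\<Sum>A\<in>S. f A) ^ k = (\<Sum>L\<in>{L. set L \<subseteq> S \<and> length L = k}. prod_list (map f L))"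
proof (induction k)
  case 0
  have "{L. set L \<subseteq> S \<and> length L = 0} = {[]}"
    by auto
  then show ?case
    by simp
next
  case (Suc k)
  let ?L = "\<lambda>k. {L. set L \<subseteq> S \<and> length L = k}"
  have lists: "?L (Suc k) = (\<lambda>(A, L). A # L) ` (S \<times> ?L k)"
    by (auto simp: length_Suc_conv)
  have inj: "inj_on (\<lambda>(A, L). A # L) (S \<times> ?L k)"
    by (auto simp: inj_on_def)
  have "(\<Sum>A\<in>S. f A) ^ Suc k = (\<Sum>(A, L)\<in>S \<times> ?L k. prod_list (map f (A # L)))"
    by (simp add: Suc.IH sum_product sum.cartesian_product)
  also have "\<dots> = (\<Sum>L\<in>?L (Suc k). prod_list (map f L))"
    unfolding lists sum.reindex[OF inj] by (simp add: comp_def case_prod_unfold)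
  finally show ?case .
qed

lemma block_sum_power_eq_sum_Pow:
  assumes "finite S"
  shows "block_sum S ^ k =
    (\<Sum>T\<in>Pow S. \<Sum>L\<in>{L. set L = T \<and> length L = k}. monom (concat L) :: 'a::semiring_1 fpoly)"
proof -
  have "block_sum S ^ k = (\<Sum>L\<in>{L. set L \<subseteq> S \<and> length L = k}. monom (concat L) :: 'a fpoly)"
    using assms by (simp add: block_sum_def power_sum_eq_sum_lists prod_list_monom)
  also have "\<dots> = (\<Sum>T\<in>Pow S. \<Sum>L\<in>{L \<in> {L. set L \<subseteq> S \<and> length L = k}. set L = T}. monom (concat L))"
    using assms by (intro sum.group[symmetric]) (auto simp: finite_lists_length_eq)
  also have "\<dots> = (\<Sum>T\<in>Pow S. \<Sum>L\<in>{L. set L = T \<and> length L = k}. monom (concat L))"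
    by (intro sum.cong refl) blast
  finally show ?thesis .
qed

lemma sym_prod_inclusion_exclusion:
  assumes "finite W"
  shows "sym_prod W = (\<Sum>S\<in>Pow W. (- 1) ^ (card W - card S) * block_sum S ^ card W :: 'a::ring_1 fpoly)"
proof -
  let ?f = "\<lambda>T. \<Sum>L\<in>{L. set L = T \<and> length L = card W}. monom (concat L) :: 'a fpoly"
  have "{L. set L = W \<and> length L = card W} = permutations_of_set W"
    by (auto intro: card_distinct simp: length_finite_permutations_of_set permutations_of_set_def)
  then have "sym_prod W = ?f W"
    by (simp add: sym_prod_def)
  also have "\<dots> = (\<Sum>S\<in>Pow W. (- 1) ^ (card W - card S) * block_sum S ^ card W)"
    using assms
    by (intro inclusion_exclusion_mobius[where f = ?f and g = "\<lambda>S. block_sum S ^ card W"])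
      (simp_all add: block_sum_power_eq_sum_Pow)
  finally show ?thesis .
qed

lemma ncspan_subset:
  assumes "nczero \<in> I" "\<And>p q. p \<in> I \<Longrightarrow> q \<in> I \<Longrightarrow> ncadd p q \<in> I"
    and "\<And>c p. p \<in> I \<Longrightarrow> ncscale c p \<in> I" "G \<subseteq> I"
  shows "ncspan G \<subseteq> I"
proof
  fix p assume "p \<in> ncspan G"
  then obtain S c where S: "finite S" "S \<subseteq> G" and p: "p = (\<lambda>w. \<Sum>g\<in>S. c g * g w)"
    unfolding ncspan_def by blast
  from S have "(\<lambda>w. \<Sum>g\<in>S. c g * g w) \<in> I"
  proof (induction S rule: finite_induct)
    case empty
    then show ?case
      using assms(1) by (simp add: nczero_def)
  next
    case (insert g S)
    then have "ncadd (ncscale (c g) g) (\<lambda>w. \<Sum>g\<in>S. c g * g w) \<in> I"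
      using assms(2-4) by blast
    then show ?case
      using insert.hyps by (simp add: ncadd_def ncscale_def)
  qed
  then show "p \<in> I"
    by (simp add: p)
qed

lemma nczero_in_Vmult: "nczero \<in> Vmult m"
  using nczero_in_ncpolys by (simp add: Vmult_def nczero_def)

lemma ncadd_in_Vmult:
  assumes "p \<in> Vmult m" "q \<in> Vmult m"
  shows "ncadd p q \<in> Vmult m"
proof -
  have "p w \<noteq> 0 \<or> q w \<noteq> 0" if "ncadd p q w \<noteq> 0" for w
    using that by (auto simp: ncadd_def)
  then show ?thesis
    using assms ncadd_in_ncpolys unfolding Vmult_def by blast
qed

lemma ncscale_in_Vmult: "p \<in> Vmult m \<Longrightarrow> ncscale c p \<in> Vmult m"
  by (simp add: Vmult_def ncscale_in_ncpolys) (simp add: ncscale_def)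

lemma ncspan_subset_Wnm: "G \<subseteq> Wnm n m \<Longrightarrow> ncspan G \<subseteq> Wnm n m"
  using is_ncideal_Tideal_pow[of n] nczero_in_Vmult ncadd_in_Vmult ncscale_in_Vmult
  by (intro ncspan_subset) (auto simp: Wnm_def is_ncideal_def)

lemma P_O_in_Tideal_pow:
  assumes "1 \<le> n" "W \<in> Omega n m"
  shows "(P_O W :: 'a::field ncpoly) \<in> Tideal_pow n"
proof -
  have W: "finite W" "card W = n" "\<And>A. A \<in> W \<Longrightarrow> A \<noteq> [] \<and> set A \<subseteq> {1..m}"
    using assms(2) by (auto simp: Omega_def)
  have "(sym_prod W :: 'a fpoly) \<in> fpoly.span ((\<lambda>S. block_sum S ^ n) ` Pow W)"
    unfolding sym_prod_inclusion_exclusion[OF W(1)] W(2) neg_one_power_mult_eq_smult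
    by (intro fpoly.span_sum fpoly.span_scale fpoly.span_base) auto
  then have "P_O W \<in> ncspan (Poly_Mapping.lookup ` (\<lambda>S. block_sum S ^ n :: 'a fpoly) ` Pow W)"
    using lookup_span_subset_ncspan by (fastforce simp flip: coeff_sym_prod)
  also have "\<dots> \<subseteq> Tideal_pow n"
  proof (rule ncspan_subset)
    show "Poly_Mapping.lookup ` (\<lambda>S. block_sum S ^ n :: 'a fpoly) ` Pow W \<subseteq> Tideal_pow n"
    proof clarify
      fix S assume "S \<subseteq> W"
      then have "A \<noteq> [] \<and> 0 \<notin> set A" if "A \<in> S" for A
        using W(3)[of A] that by force
      then have "admissible (block_sum S :: 'a fpoly)"
        unfolding block_sum_def by (intro admissible_sum admissible_single) auto
      then show "coeff (block_sum S ^ n :: 'a fpoly) \<in> Tideal_pow n"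
        by (rule power_in_Tideal_pow[OF assms(1)])
    qed
  qed (use is_ncideal_Tideal_pow[of n] in \<open>auto simp: is_ncideal_def\<close>)
  finally show ?thesis .
qed

lemma P_O_in_Vmult:
  assumes "1 \<le> m" "W \<in> Omega n m"
  shows "(P_O W :: 'a::field ncpoly) \<in> Vmult m"
proof -
  have "v \<noteq> [] \<and> 0 \<notin> set v \<and> distinct v \<and> set v = {1..m}"
    if key: "v \<in> Poly_Mapping.keys (sym_prod W :: 'a fpoly)" for v
  proof -
    obtain L where L: "L \<in> permutations_of_set W" "v = concat L"
      using key keys_sum[of "\<lambda>L. monom (concat L) :: 'a fpoly"] by (auto simp: sym_prod_def)
    then have "set v = {1..m}"
      using assms(2) by (simp add: Omega_def permutations_of_set_def)
    moreover have "distinct v"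
      using L assms(2) unfolding Omega_def permutations_of_set_def by (auto intro!: distinct_concat)
    ultimately show ?thesis
      using assms(1) by auto
  qed
  then show ?thesis
    by (auto simp: Vmult_def lookup_in_ncpolys_iff admissible_def in_keys_iff simp flip: coeff_sym_prod)
qed

theorem corollary4p5:
  fixes n m :: nat
  assumes "1 \<le> n" and "n \<le> m"
  shows "(Wnm n m :: ('a::field_char_0) ncpoly set) = ncspan (P_O ` Omega n m)"
proof (rule subset_antisym)
  show "Wnm n m \<subseteq> (ncspan (P_O ` Omega n m) :: 'a ncpoly set)"
    by (rule Wnm_subset_ncspan[OF assms(1)])
  show "ncspan (P_O ` Omega n m) \<subseteq> (Wnm n m :: 'a ncpoly set)"
    using P_O_in_Tideal_pow[OF assms(1)] P_O_in_Vmult[OF le_trans[OF assms]]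
    by (intro ncspan_subset_Wnm) (auto simp: Wnm_def)
qed

end
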